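(* Let $m\ge2$ be an integer, let $x_0,\dots,x_N\in[0,1]$ be distinct nodes, and let $$G(x)=\frac{\operatorname{sign}x}{2}\left(\frac{e^x-e^{-x}}{2}-\sum_{k=1}^{m-1}\frac{x^{2k-1}}{(2k-1)!}\right).$$ Let $M$ be the $(N+1)\times(N+1)$ matrix $M=(G(x_\beta-x_\gamma))_{\beta,\gamma=0}^N$ and let $S$ be the $m\times(N+1)$ matrix whose rows are $(x_0^{\alpha},\dots,x_N^{\alpha})$ for $\alpha=0,1,\dots,m-2$ and, as last row, $(e^{-x_0},\dots,e^{-x_N})$. If $S$ has a right inverse, then the $(N+1+m)\times(N+1+m)$ matrix $$Q=\begin{pmatrix}M&S^*\\ S&0\end{pmatrix}$$ is nonsingular, where $S^*$ denotes the transpose of $S$.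
   Context: $Q$ is the matrix of the linear system $\sum_\gamma\overline C_\gamma G(x_\beta-x_\gamma)+\sum_{\alpha=0}^{m-2}\lambda_\alpha x_\beta^\alpha+\lambda_{m-1}e^{-x_\beta}=F(x_\beta)$ ($\beta=0,\dots,N$), $\sum_\gamma\overline C_\gamma x_\gamma^\alpha=0$ ($\alpha=0,\dots,m-2$), $\sum_\gamma\overline C_\gamma e^{-x_\gamma}=0$, which arises in minimizing the norm of the error functional of the quadrature formula $\int_0^1\varphi\,dx\cong\sum_\beta C_\beta\varphi(x_\beta)$ in the space $W_2^{(m,m-1)}(0,1)$ with norm $\left(\int_0^1(\varphi^{(m)}+\varphi^{(m-1)})^2dx\right)^{1/2}$. *)

theory Defs
  imports Complex_Main "Jordan_Normal_Form.Matrix"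
begin

definition G :: "nat \<Rightarrow> real \<Rightarrow> real" where
  "G m x = sgn x / 2 * ((exp x - exp (- x)) / 2
      - (\<Sum>k = 1..m - 1. x ^ (2 * k - 1) / fact (2 * k - 1)))"

definition M_mat :: "nat \<Rightarrow> nat \<Rightarrow> (nat \<Rightarrow> real) \<Rightarrow> real mat" where
  "M_mat m N x = mat (N + 1) (N + 1) (\<lambda>(\<beta>, \<gamma>). G m (x \<beta> - x \<gamma>))"

definition S_mat :: "nat \<Rightarrow> nat \<Rightarrow> (nat \<Rightarrow> real) \<Rightarrow> real mat" where
  "S_mat m N x = mat m (N + 1)
     (\<lambda>(\<alpha>, \<gamma>). if \<alpha> \<le> m - 2 then x \<gamma> ^ \<alpha> else exp (- x \<gamma>))"

definition Q_mat :: "nat \<Rightarrow> nat \<Rightarrow> (nat \<Rightarrow> real) \<Rightarrow> real mat" where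
  "Q_mat m N x = four_block_mat (M_mat m N x) (transpose_mat (S_mat m N x))
                                (S_mat m N x) (0\<^sub>m m m)"

end

theory Submission
  imports Defs "HOL-Analysis.Analysis" "Jordan_Normal_Form.Determinant"
begin

text \<open>
  Let \<open>Q (c, \<lambda>) = 0\<close>. The lower block row says that \<open>c\<close> annihilates the powers
  \<open>x\<^sup>\<alpha>\<close>, \<open>\<alpha> \<le> m - 2\<close>, and \<open>e\<^sup>-\<^sup>x\<close>; pairing the upper block row with \<open>c\<close> then kills
  the \<open>\<lambda>\<close>-terms, so \<open>\<Sum> c\<^sub>\<beta> c\<^sub>\<gamma> G(x\<^sub>\<beta> - x\<^sub>\<gamma>) = 0\<close>.

  Let \<open>R\<^sub>k(u) = e\<^sup>u - \<Sum>\<^sub>j\<^sub><\<^sub>k u\<^sup>j/j!\<close> and \<open>k = m - 1\<close>. As \<open>R\<^sub>k\<close> is the derivative of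
  \<open>R\<^sub>k\<^sub>+\<^sub>1\<close>, which vanishes at \<open>0\<close>, repeated integration by parts shows that
  \<open>\<integral> R\<^sub>k(t - x\<^sub>\<beta>) R\<^sub>k(t - x\<^sub>\<gamma>) dt\<close> over \<open>[x\<^sub>\<gamma>, x\<^sub>\<beta>]\<close> is \<open>(-1)\<^sup>k\<close> times the odd part
  of \<open>R\<^sub>2\<^sub>k\<close> at \<open>x\<^sub>\<beta> - x\<^sub>\<gamma>\<close>, while \<open>2 G(d)\<close> is \<open>sgn d\<close> times that odd part. Since the
  moment conditions annihilate the polynomial and exponential parts of these kernels,
  the quadratic form equals \<open>\<plusminus>\<integral> \<psi>\<^sup>2\<close> for the spline
  \<open>\<psi>(t) = \<Sum> c\<^sub>\<gamma> R\<^sub>k(max (t - x\<^sub>\<gamma>) 0)\<close>. Hence \<open>\<psi> = 0\<close>, which forces \<open>c = 0\<close>;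
  then \<open>S\<^sup>T \<lambda> = 0\<close> and the right inverse of \<open>S\<close> give \<open>\<lambda> = 0\<close>.
\<close>

section \<open>Remainders of the exponential series\<close>

definition exp_remainder :: "nat \<Rightarrow> real \<Rightarrow> real" where
  "exp_remainder k u = exp u - (\<Sum>j<k. u ^ j / fact j)"

lemma exp_remainder_0 [simp]: "exp_remainder 0 u = exp u"
  by (simp add: exp_remainder_def)

lemma exp_remainder_Suc: "exp_remainder (Suc k) u = exp_remainder k u - u ^ k / fact k"
  by (simp add: exp_remainder_def)

lemma exp_remainder_at_0 [simp]: "0 < k \<Longrightarrow> exp_remainder k 0 = 0"
  by (cases k) (simp_all add: exp_remainder_def sum.lessThan_Suc_shift del: sum.lessThan_Suc)

lemma exp_remainder_pos:
  assumes "0 < u"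
  shows "0 < exp_remainder k u"
proof (cases "k = 0")
  case False
  then obtain t where "exp u = (\<Sum>j<k. u ^ j / fact j) + exp t / fact k * u ^ k"
    using Maclaurin_exp_lt[of u k] assms by auto
  then show ?thesis
    using assms by (simp add: exp_remainder_def)
qed simp

lemma has_real_derivative_exp_remainder:
  "(exp_remainder (Suc k) has_real_derivative exp_remainder k u) (at u)"
proof (induction k)
  case 0
  show ?case
    unfolding exp_remainder_def by (auto intro!: derivative_eq_intros)
next
  case (Suc k)
  have "real (Suc k) * u ^ k / fact (Suc k) = u ^ k / fact k"
    by (simp add: fact_Suc del: of_nat_Suc)
  then have "((\<lambda>u. u ^ Suc k / fact (Suc k)) has_real_derivative u ^ k / fact k) (at u)"
    using DERIV_cdivide[OF DERIV_pow[of "Suc k" u], of "fact (Suc k)"] by simp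
  from DERIV_diff[OF Suc.IH this] show ?case
    by (simp add: exp_remainder_Suc[of "Suc k"] exp_remainder_Suc[of k] fun_eq_iff)
qed

lemma continuous_on_exp_remainder [continuous_intros]:
  "continuous_on S f \<Longrightarrow> continuous_on S (\<lambda>t. exp_remainder k (f t))"
  unfolding exp_remainder_def by (intro continuous_intros) auto

lemma exp_remainder_min_plus_max:
  "0 < k \<Longrightarrow> exp_remainder k (min u 0) + exp_remainder k (max u 0) = exp_remainder k u"
  by (cases "0 \<le> u") auto

lemma exp_remainder_shift_has_real_derivative:
  "((\<lambda>t. exp_remainder (Suc k) (t - x)) has_real_derivative exp_remainder k (t - x)) (at t)"
  using DERIV_chain2[OF has_real_derivative_exp_remainder[of k "t - x"]
      DERIV_diff[OF DERIV_ident DERIV_const]]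
  by simp

lemma fundamental_theorem_of_calculus_real:
  fixes f f' :: "real \<Rightarrow> real"
  assumes "a \<le> b" and "\<And>t. (f has_real_derivative f' t) (at t)"
  shows "(f' has_integral (f b - f a)) {a..b}"
  using assms
  by (intro fundamental_theorem_of_calculus)
     (auto simp: has_real_derivative_iff_has_vector_derivative[symmetric]
           intro: has_field_derivative_at_within)

lemma has_integral_exp_remainder_by_parts:
  assumes "y \<le> x" and f: "\<And>t. (f has_real_derivative f' t) (at t)"
  shows "((\<lambda>t. exp_remainder k (t - x) * f t + exp_remainder (Suc k) (t - x) * f' t)
           has_integral - exp_remainder (Suc k) (y - x) * f y) {y..x}"
proof -
  have "((\<lambda>t. exp_remainder (Suc k) (t - x) * f t) has_real_derivative
          exp_remainder k (t - x) * f t + exp_remainder (Suc k) (t - x) * f' t) (at t)" for t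
    using DERIV_mult[OF exp_remainder_shift_has_real_derivative f] by (simp add: ac_simps)
  from fundamental_theorem_of_calculus_real[OF assms(1) this] show ?thesis
    by simp
qed

lemma has_integral_exp_remainder_times_exp:
  assumes "y \<le> x"
  shows "((\<lambda>t. exp_remainder k (t - x) * exp (t - y)) has_integral
           ((-1) ^ k * exp_remainder k (x - y) - exp_remainder k (y - x)) / 2) {y..x}"
proof (induction k)
  case 0
  have "((\<lambda>t. exp (2 * t - x - y) / 2) has_real_derivative exp (t - x) * exp (t - y)) (at t)" for t
    by (auto intro!: derivative_eq_intros simp: mult_exp_exp)
  from fundamental_theorem_of_calculus_real[OF assms this]
  have "((\<lambda>t. exp (t - x) * exp (t - y)) has_integral
          exp (2 * x - x - y) / 2 - exp (2 * y - x - y) / 2) {y..x}" .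
  moreover have "2 * x - x - y = x - y" "2 * y - x - y = y - x"
    by simp_all
  ultimately show ?case
    by (simp add: diff_divide_distrib)
next
  case (Suc k)
  have "((\<lambda>t. exp_remainder k (t - x) * exp (t - y) + exp_remainder (Suc k) (t - x) * exp (t - y))
          has_integral - exp_remainder (Suc k) (y - x) * exp (y - y)) {y..x}"
    by (rule has_integral_exp_remainder_by_parts[OF assms]) (auto intro!: derivative_eq_intros)
  from has_integral_diff[OF this Suc.IH]
  have "((\<lambda>t. exp_remainder (Suc k) (t - x) * exp (t - y)) has_integral
          - exp_remainder (Suc k) (y - x)
          - ((-1) ^ k * exp_remainder k (x - y) - exp_remainder k (y - x)) / 2) {y..x}"
    by simp
  moreover have "(y - x) ^ k = (-1) ^ k * (x - y) ^ k"
    by (metis minus_diff_eq power_minus)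
  then have "- exp_remainder (Suc k) (y - x)
          - ((-1) ^ k * exp_remainder k (x - y) - exp_remainder k (y - x)) / 2
        = ((-1) ^ Suc k * exp_remainder (Suc k) (x - y) - exp_remainder (Suc k) (y - x)) / 2"
    by (simp add: exp_remainder_Suc field_simps)
  ultimately show ?case
    by simp
qed

lemma has_integral_exp_remainder_product:
  assumes "y \<le> x"
  shows "((\<lambda>t. exp_remainder a (t - x) * exp_remainder b (t - y)) has_integral
           (-1) ^ b * (((-1) ^ (a + b) * exp_remainder (a + b) (x - y)
                        - exp_remainder (a + b) (y - x)) / 2)) {y..x}"
proof (induction b arbitrary: a)
  case 0
  show ?case
    using has_integral_exp_remainder_times_exp[OF assms, of a] by simp
next
  case (Suc b)
  have "((\<lambda>t. exp_remainder a (t - x) * exp_remainder (Suc b) (t - y)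
            + exp_remainder (Suc a) (t - x) * exp_remainder b (t - y)) has_integral 0) {y..x}"
    using has_integral_exp_remainder_by_parts[OF assms exp_remainder_shift_has_real_derivative[of b y], of a]
    by simp
  from has_integral_diff[OF this Suc.IH[of "Suc a"]] show ?case
    by simp
qed

definition odd_exp_remainder :: "nat \<Rightarrow> real \<Rightarrow> real" where
  "odd_exp_remainder n d = (exp_remainder n d - exp_remainder n (- d)) / 2"

lemma odd_exp_remainder_0 [simp]: "odd_exp_remainder n 0 = 0"
  by (simp add: odd_exp_remainder_def)

lemma odd_part_taylor_sum:
  fixes d :: real
  shows "(\<Sum>j<2 * n. (d ^ j - (- d) ^ j) / fact j)
         = 2 * (\<Sum>k = 1..n. d ^ (2 * k - 1) / fact (2 * k - 1))"
proof (induction n)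
  case (Suc n)
  have "(- d) ^ (2 * n) = d ^ (2 * n)"
    by (simp add: power_mult)
  then have "(\<Sum>j<2 * Suc n. (d ^ j - (- d) ^ j) / fact j)
      = (\<Sum>j<2 * n. (d ^ j - (- d) ^ j) / fact j) + 2 * (d ^ Suc (2 * n) / fact (Suc (2 * n)))"
    by simp
  then show ?case
    unfolding Suc by (simp add: sum.cl_ivl_Suc)
qed simp

lemma G_eq_odd_exp_remainder:
  "G m d = sgn d * odd_exp_remainder (2 * (m - 1)) d / 2"
proof -
  have "exp_remainder (2 * (m - 1)) d - exp_remainder (2 * (m - 1)) (- d)
      = exp d - exp (- d) - (\<Sum>j<2 * (m - 1). (d ^ j - (- d) ^ j) / fact j)"
    by (simp add: exp_remainder_def sum_subtractf diff_divide_distrib)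
  then show ?thesis
    unfolding G_def odd_exp_remainder_def odd_part_taylor_sum by simp
qed

section \<open>Vanishing moments\<close>

lemma sum_mult_power_diff_eq_0:
  fixes c x :: "'i \<Rightarrow> real"
  assumes moments: "\<And>\<alpha>. \<alpha> < r \<Longrightarrow> (\<Sum>j\<in>A. c j * x j ^ \<alpha>) = 0" and "n < r"
  shows "(\<Sum>j\<in>A. c j * (t - x j) ^ n) = 0"
proof -
  have expand: "c j * (t - x j) ^ n
      = (\<Sum>l\<le>n. of_nat (n choose l) * (-1) ^ l * t ^ (n - l) * (c j * x j ^ l))" for j
  proof -
    have "(t - x j) ^ n = (- x j + t) ^ n"
      by simp
    also have "\<dots> = (\<Sum>l\<le>n. of_nat (n choose l) * (- x j) ^ l * t ^ (n - l))"
      by (rule binomial_ring)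
    finally show ?thesis
      by (simp add: power_minus[of "x j"] sum_distrib_left mult_ac)
  qed
  have "(\<Sum>j\<in>A. c j * (t - x j) ^ n)
      = (\<Sum>l\<le>n. of_nat (n choose l) * (-1) ^ l * t ^ (n - l) * (\<Sum>j\<in>A. c j * x j ^ l))"
    unfolding expand by (subst sum.swap) (simp add: sum_distrib_left)
  also have "\<dots> = 0"
    using moments \<open>n < r\<close> by (intro sum.neutral) auto
  finally show ?thesis .
qed

lemma double_sum_mult_power_diff_eq_0:
  fixes c x :: "'i \<Rightarrow> real"
  assumes moments: "\<And>\<alpha>. \<alpha> < r \<Longrightarrow> (\<Sum>j\<in>A. c j * x j ^ \<alpha>) = 0" and "n < 2 * r"
  shows "(\<Sum>a\<in>A. \<Sum>b\<in>A. c a * c b * (x a - x b) ^ n) = 0"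
proof -
  define coeff :: "nat \<Rightarrow> real" where "coeff l = of_nat (n choose l) * (-1) ^ (n - l)" for l
  have expand: "c a * c b * (x a - x b) ^ n
      = (\<Sum>l\<le>n. coeff l * ((c a * x a ^ l) * (c b * x b ^ (n - l))))" for a b
  proof -
    have "(x a - x b) ^ n = (x a + - x b) ^ n"
      by simp
    also have "\<dots> = (\<Sum>l\<le>n. of_nat (n choose l) * x a ^ l * (- x b) ^ (n - l))"
      by (rule binomial_ring)
    finally show ?thesis
      by (simp add: coeff_def power_minus[of "x b"] sum_distrib_left mult_ac)
  qed
  have "(\<Sum>a\<in>A. \<Sum>b\<in>A. c a * c b * (x a - x b) ^ n)
      = (\<Sum>a\<in>A. \<Sum>l\<le>n. \<Sum>b\<in>A. coeff l * ((c a * x a ^ l) * (c b * x b ^ (n - l))))"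
    unfolding expand by (rule sum.cong[OF refl], rule sum.swap)
  also have "\<dots> = (\<Sum>l\<le>n. \<Sum>a\<in>A. \<Sum>b\<in>A. coeff l * ((c a * x a ^ l) * (c b * x b ^ (n - l))))"
    by (rule sum.swap)
  also have "\<dots> = (\<Sum>l\<le>n. coeff l * ((\<Sum>a\<in>A. c a * x a ^ l) * (\<Sum>b\<in>A. c b * x b ^ (n - l))))"
    unfolding sum_product by (simp only: sum_distrib_left)
  also have "\<dots> = 0"
  proof (intro sum.neutral ballI)
    fix l assume "l \<in> {..n}"
    then have "l < r \<or> n - l < r"
      using \<open>n < 2 * r\<close> by auto
    then show "coeff l * ((\<Sum>a\<in>A. c a * x a ^ l) * (\<Sum>b\<in>A. c b * x b ^ (n - l))) = 0"
      using moments by auto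
  qed
  finally show ?thesis .
qed

lemma sum_mult_exp_remainder_eq_0:
  fixes c x :: "'i \<Rightarrow> real"
  assumes moments: "\<And>\<alpha>. \<alpha> < r \<Longrightarrow> (\<Sum>j\<in>A. c j * x j ^ \<alpha>) = 0"
    and exp_moment: "(\<Sum>j\<in>A. c j * exp (- x j)) = 0"
  shows "(\<Sum>j\<in>A. c j * exp_remainder r (t - x j)) = 0"
proof -
  have "exp (t - x j) = exp t * exp (- x j)" for j
    by (simp add: mult_exp_exp)
  then have "(\<Sum>j\<in>A. c j * exp_remainder r (t - x j))
      = exp t * (\<Sum>j\<in>A. c j * exp (- x j)) - (\<Sum>i<r. (\<Sum>j\<in>A. c j * (t - x j) ^ i) / fact i)"
    by (simp add: exp_remainder_def right_diff_distrib sum_subtractf sum_distrib_left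
        sum_divide_distrib sum.swap[of _ _ "{..<r}"] mult_ac)
  also have "\<dots> = 0"
    using exp_moment sum_mult_power_diff_eq_0[OF moments] by simp
  finally show ?thesis .
qed

lemma double_sum_mult_exp_remainder_eq_0:
  fixes c x :: "'i \<Rightarrow> real"
  assumes moments: "\<And>\<alpha>. \<alpha> < r \<Longrightarrow> (\<Sum>j\<in>A. c j * x j ^ \<alpha>) = 0"
    and exp_moment: "(\<Sum>j\<in>A. c j * exp (- x j)) = 0"
  shows "(\<Sum>a\<in>A. \<Sum>b\<in>A. c a * c b * exp_remainder (2 * r) (x a - x b)) = 0"
proof -
  have split: "c a * c b * exp_remainder (2 * r) (x a - x b)
      = (c a * exp (x a)) * (c b * exp (- x b))
        - (\<Sum>i<2 * r. c a * c b * (x a - x b) ^ i / fact i)" for a b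
  proof -
    have "exp (x a - x b) = exp (x a) * exp (- x b)"
      by (simp add: mult_exp_exp)
    then show ?thesis
      unfolding exp_remainder_def by (simp add: right_diff_distrib sum_distrib_left mult_ac)
  qed
  have "(\<Sum>a\<in>A. \<Sum>b\<in>A. \<Sum>i<2 * r. c a * c b * (x a - x b) ^ i / fact i)
      = (\<Sum>a\<in>A. \<Sum>i<2 * r. \<Sum>b\<in>A. c a * c b * (x a - x b) ^ i / fact i)"
    by (intro sum.cong refl sum.swap)
  also have "\<dots> = (\<Sum>i<2 * r. (\<Sum>a\<in>A. \<Sum>b\<in>A. c a * c b * (x a - x b) ^ i) / fact i)"
    by (subst sum.swap) (simp add: sum_divide_distrib)
  finally have "(\<Sum>a\<in>A. \<Sum>b\<in>A. c a * c b * exp_remainder (2 * r) (x a - x b))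
      = (\<Sum>a\<in>A. c a * exp (x a)) * (\<Sum>b\<in>A. c b * exp (- x b))
        - (\<Sum>i<2 * r. (\<Sum>a\<in>A. \<Sum>b\<in>A. c a * c b * (x a - x b) ^ i) / fact i)"
    unfolding split by (simp add: sum_subtractf sum_product)
  also have "\<dots> = 0"
    using exp_moment double_sum_mult_power_diff_eq_0[OF moments] by simp
  finally show ?thesis .
qed

lemma double_sum_mult_odd_exp_remainder_eq_0:
  fixes c x :: "'i \<Rightarrow> real"
  assumes moments: "\<And>\<alpha>. \<alpha> < r \<Longrightarrow> (\<Sum>j\<in>A. c j * x j ^ \<alpha>) = 0"
    and exp_moment: "(\<Sum>j\<in>A. c j * exp (- x j)) = 0"
  shows "(\<Sum>a\<in>A. \<Sum>b\<in>A. c a * c b * odd_exp_remainder (2 * r) (x a - x b)) = 0"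
proof -
  note vanish = double_sum_mult_exp_remainder_eq_0[OF moments exp_moment]
  have "(\<Sum>a\<in>A. \<Sum>b\<in>A. c a * c b * exp_remainder (2 * r) (x b - x a))
      = (\<Sum>b\<in>A. \<Sum>a\<in>A. c b * c a * exp_remainder (2 * r) (x b - x a))"
    by (subst sum.swap) (simp add: mult_ac)
  with vanish have "(\<Sum>a\<in>A. \<Sum>b\<in>A. c a * c b * exp_remainder (2 * r) (x b - x a)) = 0"
    by simp
  with vanish show ?thesis
    by (simp add: odd_exp_remainder_def right_diff_distrib sum_subtractf
        flip: sum_divide_distrib)
qed

lemma G_quadratic_form_eq:
  fixes c x :: "'i \<Rightarrow> real"
  assumes moments: "\<And>\<alpha>. \<alpha> < m - 1 \<Longrightarrow> (\<Sum>j\<in>A. c j * x j ^ \<alpha>) = 0"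
    and exp_moment: "(\<Sum>j\<in>A. c j * exp (- x j)) = 0"
  shows "(\<Sum>a\<in>A. \<Sum>b\<in>A. c a * c b * G m (x a - x b))
       = (\<Sum>a\<in>A. \<Sum>b\<in>A. c a * c b *
            (if x b \<le> x a then odd_exp_remainder (2 * (m - 1)) (x a - x b) else 0))"
proof -
  let ?O = "odd_exp_remainder (2 * (m - 1))"
  have "G m d = (if 0 \<le> d then ?O d else 0) - ?O d / 2" for d
    unfolding G_eq_odd_exp_remainder by (cases "0 < d"; cases "d = 0") auto
  then have "(\<Sum>a\<in>A. \<Sum>b\<in>A. c a * c b * G m (x a - x b))
      = (\<Sum>a\<in>A. \<Sum>b\<in>A. c a * c b * (if x b \<le> x a then ?O (x a - x b) else 0))
        - (\<Sum>a\<in>A. \<Sum>b\<in>A. c a * c b * ?O (x a - x b)) / 2"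
    by (simp add: right_diff_distrib sum_subtractf flip: sum_divide_distrib)
  then show ?thesis
    using double_sum_mult_odd_exp_remainder_eq_0[OF moments exp_moment] by simp
qed

section \<open>The quadratic form of \<open>G\<close> as an integral\<close>

definition remainder_spline :: "nat \<Rightarrow> 'i set \<Rightarrow> ('i \<Rightarrow> real) \<Rightarrow> ('i \<Rightarrow> real) \<Rightarrow> real \<Rightarrow> real"
  where "remainder_spline k A c x t = (\<Sum>j\<in>A. c j * exp_remainder k (max (t - x j) 0))"

lemma has_integral_truncated_exp_remainder_product:
  assumes "0 < k" and "u \<in> {lo..hi}" and "v \<in> {lo..hi}"
  shows "((\<lambda>t. exp_remainder k (min (t - u) 0) * exp_remainder k (max (t - v) 0)) has_integral
           (-1) ^ k * (if v \<le> u then odd_exp_remainder (2 * k) (u - v) else 0)) {lo..hi}"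
proof -
  have truncate: "exp_remainder k (min (t - u) 0) * exp_remainder k (max (t - v) 0)
      = (if t \<in> {v..u} then exp_remainder k (t - u) * exp_remainder k (t - v) else 0)" for t
    using \<open>0 < k\<close> by (auto simp: min_def max_def)
  have "{v..u} \<subseteq> {lo..hi}"
    using assms by auto
  moreover have "((\<lambda>t. exp_remainder k (t - u) * exp_remainder k (t - v)) has_integral
          (-1) ^ k * (if v \<le> u then odd_exp_remainder (2 * k) (u - v) else 0)) {v..u}"
  proof (cases "v \<le> u")
    case True
    then show ?thesis
      using has_integral_exp_remainder_product[OF True, of k k]
      by (simp add: odd_exp_remainder_def mult_2)
  qed simp
  ultimately show ?thesis
    unfolding truncate by (subst has_integral_restrict)
qed

lemma continuous_on_remainder_spline [continuous_intros]:
  "continuous_on S (remainder_spline k A c x)"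
  unfolding remainder_spline_def by (intro continuous_intros)

lemma sum_truncated_exp_remainder_eq_neg_remainder_spline:
  fixes c x :: "'i \<Rightarrow> real"
  assumes "0 < k"
    and moments: "\<And>\<alpha>. \<alpha> < k \<Longrightarrow> (\<Sum>j\<in>A. c j * x j ^ \<alpha>) = 0"
    and exp_moment: "(\<Sum>j\<in>A. c j * exp (- x j)) = 0"
  shows "(\<Sum>j\<in>A. c j * exp_remainder k (min (t - x j) 0)) = - remainder_spline k A c x t"
proof -
  have "(\<Sum>j\<in>A. c j * exp_remainder k (min (t - x j) 0)) + remainder_spline k A c x t
      = (\<Sum>j\<in>A. c j * exp_remainder k (t - x j))"
    unfolding remainder_spline_def sum.distrib[symmetric]
    by (intro sum.cong refl) (metis distrib_left exp_remainder_min_plus_max[OF \<open>0 < k\<close>])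
  also have "\<dots> = 0"
    by (rule sum_mult_exp_remainder_eq_0[OF moments exp_moment])
  finally show ?thesis
    by simp
qed

text \<open>
  By the previous lemma \<open>-\<psi>\<^sup>2\<close> is a double sum of products of a left and a right
  truncation, whose integrals were computed above.
\<close>

lemma has_integral_remainder_spline_squared:
  fixes c x :: "'i \<Rightarrow> real"
  assumes "0 < k" and "finite A" and nodes: "x ` A \<subseteq> {lo..hi}"
    and moments: "\<And>\<alpha>. \<alpha> < k \<Longrightarrow> (\<Sum>j\<in>A. c j * x j ^ \<alpha>) = 0"
    and exp_moment: "(\<Sum>j\<in>A. c j * exp (- x j)) = 0"
  shows "((\<lambda>t. (remainder_spline k A c x t)\<^sup>2) has_integral
           (-1) ^ Suc k * (\<Sum>a\<in>A. \<Sum>b\<in>A. c a * c b *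
              (if x b \<le> x a then odd_exp_remainder (2 * k) (x a - x b) else 0))) {lo..hi}"
proof -
  let ?W = "\<lambda>a b. if x b \<le> x a then odd_exp_remainder (2 * k) (x a - x b) else 0"
  have "((\<lambda>t. \<Sum>a\<in>A. \<Sum>b\<in>A. c a * c b *
              (exp_remainder k (min (t - x a) 0) * exp_remainder k (max (t - x b) 0)))
          has_integral (\<Sum>a\<in>A. \<Sum>b\<in>A. c a * c b * ((-1) ^ k * ?W a b))) {lo..hi}"
    using nodes
    by (intro has_integral_sum has_integral_mult_right has_integral_truncated_exp_remainder_product
        \<open>finite A\<close> \<open>0 < k\<close>) auto
  moreover have "(\<Sum>a\<in>A. \<Sum>b\<in>A. c a * c b *
              (exp_remainder k (min (t - x a) 0) * exp_remainder k (max (t - x b) 0)))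
      = - (remainder_spline k A c x t)\<^sup>2" for t
  proof -
    have "(\<Sum>a\<in>A. \<Sum>b\<in>A. c a * c b *
              (exp_remainder k (min (t - x a) 0) * exp_remainder k (max (t - x b) 0)))
        = (\<Sum>a\<in>A. c a * exp_remainder k (min (t - x a) 0))
          * (\<Sum>b\<in>A. c b * exp_remainder k (max (t - x b) 0))"
      unfolding sum_product by (simp add: mult_ac)
    then show ?thesis
      by (simp add: sum_truncated_exp_remainder_eq_neg_remainder_spline[OF \<open>0 < k\<close> moments exp_moment]
          remainder_spline_def power2_eq_square)
  qed
  moreover have "(\<Sum>a\<in>A. \<Sum>b\<in>A. c a * c b * ((-1) ^ k * ?W a b))
      = (-1) ^ k * (\<Sum>a\<in>A. \<Sum>b\<in>A. c a * c b * ?W a b)"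
    by (simp add: sum_distrib_left mult_ac)
  ultimately have "((\<lambda>t. - (remainder_spline k A c x t)\<^sup>2) has_integral
      (-1) ^ k * (\<Sum>a\<in>A. \<Sum>b\<in>A. c a * c b * ?W a b)) {lo..hi}"
    by simp
  from has_integral_neg[OF this] show ?thesis
    by simp
qed

lemma remainder_spline_eq_single_term:
  fixes c x :: "'i \<Rightarrow> real"
  assumes "0 < k" and "finite A" and "j \<in> A" and "x j \<le> t"
    and right_of_t: "\<And>i. i \<in> A \<Longrightarrow> i \<noteq> j \<Longrightarrow> c i \<noteq> 0 \<Longrightarrow> t \<le> x i"
  shows "remainder_spline k A c x t = c j * exp_remainder k (t - x j)"
proof -
  have "remainder_spline k A c x t = (\<Sum>i\<in>A. if i = j then c j * exp_remainder k (t - x j) else 0)"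
    unfolding remainder_spline_def
  proof (intro sum.cong refl)
    fix i assume "i \<in> A"
    show "c i * exp_remainder k (max (t - x i) 0) = (if i = j then c j * exp_remainder k (t - x j) else 0)"
    proof (cases "i = j \<or> c i = 0")
      case True
      then show ?thesis
        using \<open>x j \<le> t\<close> by auto
    next
      case False
      then have "t \<le> x i"
        using right_of_t \<open>i \<in> A\<close> by blast
      then show ?thesis
        using False \<open>0 < k\<close> by simp
    qed
  qed
  also have "\<dots> = c j * exp_remainder k (t - x j)"
    using \<open>finite A\<close> \<open>j \<in> A\<close> by simp
  finally show ?thesis .
qed

text \<open>
  Just to the right of the leftmost node with a nonzero coefficient, only that node
  contributes to the spline.
\<close>

lemma coeff_eq_0_if_remainder_spline_eq_0:
  fixes c x :: "'i \<Rightarrow> real"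
  assumes "0 < k" and "finite A" and "inj_on x A"
    and spline: "\<And>t. remainder_spline k A c x t = 0" and "j \<in> A"
  shows "c j = 0"
proof (rule ccontr)
  assume "c j \<noteq> 0"
  define B where "B = {i \<in> A. c i \<noteq> 0}"
  have "finite B" and "j \<in> B"
    using \<open>finite A\<close> \<open>j \<in> A\<close> \<open>c j \<noteq> 0\<close> by (auto simp: B_def)
  then have "Min (x ` B) \<in> x ` B"
    by (intro Min_in) auto
  then obtain j0 where j0: "j0 \<in> B" "x j0 = Min (x ` B)"
    by (metis imageE)
  then have "j0 \<in> A" and "c j0 \<noteq> 0"
    by (simp_all add: B_def)
  define u where "u = Min (insert (x j0 + 1) (x ` {i \<in> B. x j0 < x i}))"
  define t where "t = (x j0 + u) / 2"
  have "x j0 < u"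
    using \<open>finite B\<close> by (simp add: u_def)
  have right_of_t: "t \<le> x i" if "i \<in> A" "i \<noteq> j0" "c i \<noteq> 0" for i
  proof -
    have "i \<in> B" and "x i \<noteq> x j0"
      using that j0 \<open>inj_on x A\<close> by (auto simp: B_def inj_on_def)
    moreover have "x j0 \<le> x i"
      using \<open>finite B\<close> \<open>i \<in> B\<close> j0(2) by simp
    ultimately have "x j0 < x i"
      by simp
    then have "u \<le> x i"
      using \<open>finite B\<close> \<open>i \<in> B\<close> by (simp add: u_def)
    then show ?thesis
      using \<open>x j0 < u\<close> by (simp add: t_def)
  qed
  have "x j0 \<le> t"
    using \<open>x j0 < u\<close> by (simp add: t_def)
  then have "remainder_spline k A c x t = c j0 * exp_remainder k (t - x j0)"
    using right_of_t by (rule remainder_spline_eq_single_term[OF \<open>0 < k\<close> \<open>finite A\<close> \<open>j0 \<in> A\<close>])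
  moreover have "0 < exp_remainder k (t - x j0)"
    using \<open>x j0 < u\<close> by (intro exp_remainder_pos) (simp add: t_def)
  ultimately show False
    using spline \<open>c j0 \<noteq> 0\<close> by simp
qed

lemma remainder_spline_eq_0_if_G_quadratic_form_eq_0:
  fixes c x :: "'i \<Rightarrow> real"
  assumes "2 \<le> m" and "finite A"
    and moments: "\<And>\<alpha>. \<alpha> < m - 1 \<Longrightarrow> (\<Sum>j\<in>A. c j * x j ^ \<alpha>) = 0"
    and exp_moment: "(\<Sum>j\<in>A. c j * exp (- x j)) = 0"
    and quadratic_form: "(\<Sum>a\<in>A. \<Sum>b\<in>A. c a * c b * G m (x a - x b)) = 0"
  shows "remainder_spline (m - 1) A c x t = 0"
proof -
  let ?\<psi>\<^sub>2 = "\<lambda>t. (remainder_spline (m - 1) A c x t)\<^sup>2"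
  obtain B where B: "\<forall>y \<in> x ` A. \<bar>y\<bar> \<le> B"
    using finite_imp_bounded[of "x ` A"] \<open>finite A\<close> by (auto simp: bounded_real)
  define lo hi where "lo = - \<bar>B\<bar> - \<bar>t\<bar> - 1" and "hi = \<bar>B\<bar> + \<bar>t\<bar> + 1"
  have "x ` A \<subseteq> {lo..hi}"
    using B by (force simp: lo_def hi_def abs_le_iff)
  moreover have "0 < m - 1"
    using \<open>2 \<le> m\<close> by simp
  ultimately have "(?\<psi>\<^sub>2 has_integral 0) {lo..hi}"
    using has_integral_remainder_spline_squared[OF \<open>0 < m - 1\<close> \<open>finite A\<close> _ moments exp_moment]
      quadratic_form G_quadratic_form_eq[OF moments exp_moment]
    by simp
  then have "integral {lo..hi} ?\<psi>\<^sub>2 = 0"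
    by (rule integral_unique)
  moreover have "t \<in> {lo..hi}" and "lo < hi"
    using abs_ge_zero[of B] abs_ge_self[of t] abs_ge_minus_self[of t]
    by (auto simp: lo_def hi_def)
  moreover have "continuous_on {lo..hi} ?\<psi>\<^sub>2"
    by (intro continuous_intros)
  ultimately show ?thesis
    using integral_eq_0_iff[of lo hi ?\<psi>\<^sub>2] by simp
qed

lemma coeff_eq_0_if_G_quadratic_form_eq_0:
  fixes c x :: "'i \<Rightarrow> real"
  assumes "2 \<le> m" and "finite A" and "inj_on x A"
    and moments: "\<And>\<alpha>. \<alpha> < m - 1 \<Longrightarrow> (\<Sum>j\<in>A. c j * x j ^ \<alpha>) = 0"
    and exp_moment: "(\<Sum>j\<in>A. c j * exp (- x j)) = 0"
    and quadratic_form: "(\<Sum>a\<in>A. \<Sum>b\<in>A. c a * c b * G m (x a - x b)) = 0"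
    and "j \<in> A"
  shows "c j = 0"
proof -
  have "0 < m - 1"
    using \<open>2 \<le> m\<close> by simp
  have spline: "remainder_spline (m - 1) A c x t = 0" for t
    using remainder_spline_eq_0_if_G_quadratic_form_eq_0[OF \<open>2 \<le> m\<close> \<open>finite A\<close> moments exp_moment
        quadratic_form]
    by simp
  show ?thesis
    by (rule coeff_eq_0_if_remainder_spline_eq_0[OF \<open>0 < m - 1\<close> \<open>finite A\<close> \<open>inj_on x A\<close> spline
          \<open>j \<in> A\<close>])
qed

section \<open>Saddle point matrices\<close>

lemma invertible_mat_if_kernel_trivial:
  fixes A :: "'a :: field mat"
  assumes A: "A \<in> carrier_mat n n"
    and kernel: "\<And>v. v \<in> carrier_vec n \<Longrightarrow> A *\<^sub>v v = 0\<^sub>v n \<Longrightarrow> v = 0\<^sub>v n"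
  shows "invertible_mat A"
proof -
  have "det A \<noteq> 0"
    using det_0_iff_vec_prod_zero[OF A] kernel by blast
  from det_non_zero_imp_unit[OF A this, of "()"]
  obtain B where "B \<in> carrier_mat n n" "B * A = 1\<^sub>m n" "A * B = 1\<^sub>m n"
    unfolding Units_def ring_mat_def by auto
  with A show ?thesis
    unfolding invertible_mat_def inverts_mat_def by auto
qed

lemma invertible_saddle_point_mat:
  fixes M S R :: "'a :: field mat"
  assumes M: "M \<in> carrier_mat n n" and S: "S \<in> carrier_mat k n"
    and R: "R \<in> carrier_mat n k" and right_inverse: "S * R = 1\<^sub>m k"
    and definite: "\<And>c. c \<in> carrier_vec n \<Longrightarrow> S *\<^sub>v c = 0\<^sub>v k \<Longrightarrow> c \<bullet> (M *\<^sub>v c) = 0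
                        \<Longrightarrow> c = 0\<^sub>v n"
  shows "invertible_mat (four_block_mat M (transpose_mat S) S (0\<^sub>m k k))"
proof (rule invertible_mat_if_kernel_trivial)
  have St: "transpose_mat S \<in> carrier_mat n k"
    using S by simp
  show "four_block_mat M (transpose_mat S) S (0\<^sub>m k k) \<in> carrier_mat (n + k) (n + k)"
    using M S by (intro four_block_carrier_mat) auto
  fix v assume v: "v \<in> carrier_vec (n + k)"
    and kernel: "four_block_mat M (transpose_mat S) S (0\<^sub>m k k) *\<^sub>v v = 0\<^sub>v (n + k)"
  have zero_split: "0\<^sub>v (n + k) = 0\<^sub>v n @\<^sub>v (0\<^sub>v k :: 'a Matrix.vec)"
    by auto
  define c l where "c = vec_first v n" and "l = vec_last v k"
  have c: "c \<in> carrier_vec n" and l: "l \<in> carrier_vec k" and v_eq: "v = c @\<^sub>v l"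
    using v by (simp_all add: c_def l_def)
  have "(M *\<^sub>v c + transpose_mat S *\<^sub>v l) @\<^sub>v (S *\<^sub>v c + 0\<^sub>m k k *\<^sub>v l) = 0\<^sub>v n @\<^sub>v 0\<^sub>v k"
    using kernel four_block_mat_mult_vec[OF M St S _ c l] by (simp add: v_eq zero_split)
  then have "M *\<^sub>v c + transpose_mat S *\<^sub>v l = 0\<^sub>v n \<and> S *\<^sub>v c + 0\<^sub>m k k *\<^sub>v l = 0\<^sub>v k"
    by (subst (asm) append_vec_eq[of _ n]) (use M St c l in auto)
  moreover have "0\<^sub>m k k *\<^sub>v l = 0\<^sub>v k"
    using l by (intro eq_vecI) (auto simp: scalar_prod_def)
  ultimately have top: "M *\<^sub>v c + transpose_mat S *\<^sub>v l = 0\<^sub>v n" and Sc: "S *\<^sub>v c = 0\<^sub>v k"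
    using S c by auto
  have "c \<bullet> (transpose_mat S *\<^sub>v l) = (transpose_mat S *\<^sub>v l) \<bullet> c"
    using St c l by (intro comm_scalar_prod) auto
  also have "\<dots> = l \<bullet> (S *\<^sub>v c)"
    by (rule transpose_vec_mult_scalar[OF S c l])
  finally have "c \<bullet> (transpose_mat S *\<^sub>v l) = 0"
    using Sc l by simp
  moreover have "c \<bullet> (M *\<^sub>v c + transpose_mat S *\<^sub>v l) = 0"
    using top c by simp
  ultimately have "c \<bullet> (M *\<^sub>v c) = 0"
    using M St c l by (simp add: scalar_prod_add_distrib[of c n])
  then have c0: "c = 0\<^sub>v n"
    by (rule definite[OF c Sc])
  then have "M *\<^sub>v c = 0\<^sub>v n"
    using M by (intro eq_vecI) auto
  then have St_l: "transpose_mat S *\<^sub>v l = 0\<^sub>v n"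
    using top St l by simp
  have "l = transpose_mat (S * R) *\<^sub>v l"
    using l by (simp add: right_inverse)
  also have "\<dots> = transpose_mat R *\<^sub>v (transpose_mat S *\<^sub>v l)"
    using S R l by (simp add: transpose_mult[OF S R] assoc_mult_mat_vec[of _ k n _ k])
  also have "\<dots> = transpose_mat R *\<^sub>v 0\<^sub>v n"
    by (simp only: St_l)
  also have "\<dots> = 0\<^sub>v k"
    using R by (intro eq_vecI) auto
  finally show "v = 0\<^sub>v (n + k)"
    using c0 by (simp add: v_eq zero_split)
qed

lemma M_mat_carrier: "M_mat m N x \<in> carrier_mat (N + 1) (N + 1)"
  by (simp add: M_mat_def)

lemma S_mat_carrier: "S_mat m N x \<in> carrier_mat m (N + 1)"
  by (simp add: S_mat_def)

lemma mult_S_mat_vec_nth: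
  fixes c :: "real Matrix.vec"
  assumes "c \<in> carrier_vec (N + 1)" and "\<alpha> < m"
  shows "(S_mat m N x *\<^sub>v c) $ \<alpha>
       = (\<Sum>j<N + 1. c $ j * (if \<alpha> \<le> m - 2 then x j ^ \<alpha> else exp (- x j)))"
  using assms
  by (auto simp: S_mat_def scalar_prod_def atLeast0LessThan mult.commute simp del: sum.lessThan_Suc
      intro: sum.cong)

lemma power_moment_eq_0_if_S_mat_mult_vec_eq_0:
  fixes c :: "real Matrix.vec"
  assumes "c \<in> carrier_vec (N + 1)" and "S_mat m N x *\<^sub>v c = 0\<^sub>v m" and "\<alpha> < m - 1"
  shows "(\<Sum>j<N + 1. c $ j * x j ^ \<alpha>) = 0"
proof -
  have "\<alpha> < m" and "\<alpha> \<le> m - 2"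
    using assms(3) by simp_all
  with mult_S_mat_vec_nth[OF assms(1) this(1), of x] show ?thesis
    using assms(2) by (simp del: sum.lessThan_Suc)
qed

lemma exp_moment_eq_0_if_S_mat_mult_vec_eq_0:
  fixes c :: "real Matrix.vec"
  assumes "c \<in> carrier_vec (N + 1)" and "S_mat m N x *\<^sub>v c = 0\<^sub>v m" and "2 \<le> m"
  shows "(\<Sum>j<N + 1. c $ j * exp (- x j)) = 0"
proof -
  have "m - 1 < m" and "\<not> m - 1 \<le> m - 2"
    using assms(3) by simp_all
  with mult_S_mat_vec_nth[OF assms(1) this(1), of x] show ?thesis
    using assms(2) by (simp del: sum.lessThan_Suc)
qed

lemma scalar_prod_M_mat:
  fixes c :: "real Matrix.vec"
  assumes "c \<in> carrier_vec (N + 1)"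
  shows "c \<bullet> (M_mat m N x *\<^sub>v c) = (\<Sum>a<N + 1. \<Sum>b<N + 1. c $ a * c $ b * G m (x a - x b))"
proof -
  have "c \<bullet> (M_mat m N x *\<^sub>v c) = (\<Sum>a<N + 1. c $ a * (\<Sum>b<N + 1. G m (x a - x b) * c $ b))"
    using assms by (auto simp: M_mat_def scalar_prod_def atLeast0LessThan simp del: sum.lessThan_Suc)
  then show ?thesis
    by (simp add: sum_distrib_left mult_ac del: sum.lessThan_Suc)
qed

theorem theorem3p2:
  fixes m N :: nat and x :: "nat \<Rightarrow> real"
  assumes "m \<ge> 2"
    and "\<And>i. i \<le> N \<Longrightarrow> x i \<in> {0..1}"
    and "inj_on x {0..N}"
    and "\<exists>R \<in> carrier_mat (N + 1) m. S_mat m N x * R = 1\<^sub>m m"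
  shows "invertible_mat (Q_mat m N x)"
proof -
  obtain R where R: "R \<in> carrier_mat (N + 1) m" "S_mat m N x * R = 1\<^sub>m m"
    using assms(4) by blast
  have inj: "inj_on x {..<N + 1}"
    using assms(3) by (simp add: lessThan_Suc_atMost atLeast0AtMost)
  show ?thesis
    unfolding Q_mat_def
  proof (rule invertible_saddle_point_mat[OF M_mat_carrier S_mat_carrier R])
    fix c assume c: "c \<in> carrier_vec (N + 1)" and Sc: "S_mat m N x *\<^sub>v c = 0\<^sub>v m"
      and quadratic_form: "c \<bullet> (M_mat m N x *\<^sub>v c) = 0"
    have "c $ j = 0" if "j < N + 1" for j
      by (rule coeff_eq_0_if_G_quadratic_form_eq_0[OF \<open>m \<ge> 2\<close> _ inj
            power_moment_eq_0_if_S_mat_mult_vec_eq_0[OF c Sc]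
            exp_moment_eq_0_if_S_mat_mult_vec_eq_0[OF c Sc \<open>m \<ge> 2\<close>]])
        (use that quadratic_form scalar_prod_M_mat[OF c] in auto)
    then show "c = 0\<^sub>v (N + 1)"
      using c by (intro eq_vecI) auto
  qed
qed

end
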